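(* Let $\mathcal{A}=\{\alpha_1<\dots<\alpha_m\}\subset(0,1)$, $|\mathcal{A}|=m$. Let $(b_t)$ be base forecasts with $b_t\in\mathcal{K}$ and $(y_t)$ real outcomes with $|y_t-b_t^{\alpha}|\le R$ for all $\alpha\in\mathcal{A}$ and all $t$. Let $\ell_t(\theta)=\rho_{\mathcal{A}}(b_t+\theta,y_t)$. Let $\theta_1,\dots,\theta_T$ be the played offsets of MultiQT with learning rate $\eta>0$ started from $\tilde\theta_1=\mathbf{0}$, and let $\mathcal{C}=\bigcap_{t=1}^{T+1}(\mathcal{K}-b_t)$. Then for every $\theta\in\mathcal{C}$, $$\frac1T\sum_{t=1}^T\ell_t(\theta_t)-\frac1T\sum_{t=1}^T\ell_t(\theta)\le\frac{R^2|\mathcal{A}|}{2\eta T}+2\eta|\mathcal{A}|.$$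
   Context: $\mathcal{K}=\{x\in\mathbb{R}^m:x_1\le\dots\le x_m\}$; $\Pi_C$ is Euclidean projection; $C-v=\{x-v:x\in C\}$. Quantile loss: $\rho_\alpha(\hat y,y)=\alpha|y-\hat y|$ if $y-\hat y\ge0$ and $(1-\alpha)|y-\hat y|$ otherwise; $\rho_{\mathcal{A}}(q,y)=\sum_{\alpha\in\mathcal{A}}\rho_\alpha(q^{\alpha},y)$. MultiQT with learning rate $\eta$ and initial hidden offset $\tilde\theta_1\in\mathcal{K}$: for $t=1,2,\dots$, $\theta_t=\Pi_{\mathcal{K}-b_t}(\tilde\theta_t)$, forecast $q_t=b_t+\theta_t$, $\mathrm{cov}_t^{\alpha}=\mathbb{1}\{y_t\le q_t^{\alpha}\}$, and $\tilde\theta_{t+1}^{\alpha}=\tilde\theta_t^{\alpha}-\eta(\mathrm{cov}_t^{\alpha}-\alpha)$ for each $\alpha\in\mathcal{A}$. *)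

theory Defs
  imports Complex_Main
begin

text \<open>Quantile levels are alpha 0 < ... < alpha (m-1); vectors in R^m are
  functions nat => real, only the coordinates i < m matter.\<close>

definition Kset :: "nat \<Rightarrow> (nat \<Rightarrow> real) set" where
  "Kset m = {x. \<forall>i j. i \<le> j \<longrightarrow> j < m \<longrightarrow> x i \<le> x j}"

definition shift_set :: "(nat \<Rightarrow> real) set \<Rightarrow> (nat \<Rightarrow> real) \<Rightarrow> (nat \<Rightarrow> real) set" where
  "shift_set C v = {(\<lambda>i. x i - v i) | x. x \<in> C}"

definition sqdist :: "nat \<Rightarrow> (nat \<Rightarrow> real) \<Rightarrow> (nat \<Rightarrow> real) \<Rightarrow> real" where
  "sqdist m x y = (\<Sum>i<m. (x i - y i)^2)"

definition is_proj :: "nat \<Rightarrow> (nat \<Rightarrow> real) set \<Rightarrow> (nat \<Rightarrow> real) \<Rightarrow> (nat \<Rightarrow> real) \<Rightarrow> bool" where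
  "is_proj m C v x \<longleftrightarrow> x \<in> C \<and> (\<forall>z\<in>C. sqdist m x v \<le> sqdist m z v)"

definition rho :: "real \<Rightarrow> real \<Rightarrow> real \<Rightarrow> real" where
  "rho a yhat y = (if y - yhat \<ge> 0 then a * \<bar>y - yhat\<bar> else (1 - a) * \<bar>y - yhat\<bar>)"

definition rhoA :: "nat \<Rightarrow> (nat \<Rightarrow> real) \<Rightarrow> (nat \<Rightarrow> real) \<Rightarrow> real \<Rightarrow> real" where
  "rhoA m alpha q y = (\<Sum>i<m. rho (alpha i) (q i) y)"

text \<open>Trajectory of MultiQT: hidden offsets tth, played offsets th (time starts at 1).\<close>
definition multiqt :: "nat \<Rightarrow> (nat \<Rightarrow> real) \<Rightarrow> real \<Rightarrow> (nat \<Rightarrow> nat \<Rightarrow> real) \<Rightarrow> (nat \<Rightarrow> real)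
    \<Rightarrow> (nat \<Rightarrow> real) \<Rightarrow> (nat \<Rightarrow> nat \<Rightarrow> real) \<Rightarrow> (nat \<Rightarrow> nat \<Rightarrow> real) \<Rightarrow> bool" where
  "multiqt m alpha \<eta> b y tth1 tth th \<longleftrightarrow>
     (\<forall>i<m. tth 1 i = tth1 i) \<and>
     (\<forall>t\<ge>1. is_proj m (shift_set (Kset m) (b t)) (tth t) (th t)) \<and>
     (\<forall>t\<ge>1. \<forall>i<m. tth (t+1) i =
        tth t i - \<eta> * ((if y t \<le> b t i + th t i then 1 else 0) - alpha i))"

end

theory Submission
  imports Defs
begin

text \<open>The quantile loss is convex in the forecast with subgradient
  \<open>g = 1{y \<le> q} - \<alpha>\<close>, so the regret of round t against a comparator u is at most
  \<open>g\<^sub>t \<bullet> (\<theta>\<^sub>t - u) = g\<^sub>t \<bullet> (\<theta>\<^sup>~\<^sub>t - u) + g\<^sub>t \<bullet> (\<theta>\<^sub>t - \<theta>\<^sup>~\<^sub>t)\<close>. The hidden iterates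
  perform plain gradient steps, so the first terms telescope to at most
  \<open>|\<theta>\<^sup>~\<^sub>1 - u|\<^sup>2 / (2\<eta>) + \<eta> T m / 2\<close>. The second term is never positive: as the levels
  \<alpha> increase, a short move of the sorted forecast \<open>b\<^sub>t + \<theta>\<^sub>t\<close> along \<open>-g\<^sub>t\<close> keeps it sorted,
  and first-order optimality of the projection \<open>\<theta>\<^sub>t\<close> of \<open>\<theta>\<^sup>~\<^sub>t\<close> then gives
  \<open>g\<^sub>t \<bullet> (\<theta>\<^sub>t - \<theta>\<^sup>~\<^sub>t) \<le> 0\<close>. Finally the comparator can be clipped to \<open>[-R, R]\<^sup>m\<close> without
  increasing its loss, which bounds \<open>|\<theta>\<^sup>~\<^sub>1 - u|\<^sup>2 = |u|\<^sup>2\<close> by \<open>m R\<^sup>2\<close>.\<close>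

text \<open>At the kink \<open>q = y\<close> this is the coverage indicator minus the level, as in the
  MultiQT update.\<close>
definition quantile_subgrad :: "real \<Rightarrow> real \<Rightarrow> real \<Rightarrow> real" where
  "quantile_subgrad a q y = (if y \<le> q then 1 else 0) - a"

definition clip :: "real \<Rightarrow> real \<Rightarrow> real" where
  "clip R x = max (- R) (min R x)"

lemma rho_below: "q \<le> y \<Longrightarrow> rho a q y = a * (y - q)"
  by (simp add: rho_def)

lemma rho_above: "y \<le> q \<Longrightarrow> rho a q y = (1 - a) * (q - y)"
  by (cases "y = q") (auto simp: rho_def)

lemma rho_ge_linear:
  assumes "0 \<le> a" "a \<le> 1"
  shows "a * (y - q) \<le> rho a q y" and "(1 - a) * (q - y) \<le> rho a q y"
proof -
  have "0 \<le> a * (y - q) \<and> (1 - a) * (q - y) \<le> 0 \<and> rho a q y = a * (y - q)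
    \<or> a * (y - q) \<le> 0 \<and> 0 \<le> (1 - a) * (q - y) \<and> rho a q y = (1 - a) * (q - y)"
    using assms by (cases "q \<le> y") (simp_all add: rho_below rho_above mult_nonneg_nonpos)
  then show "a * (y - q) \<le> rho a q y" and "(1 - a) * (q - y) \<le> rho a q y" by linarith+
qed

lemma abs_quantile_subgrad_le: "0 \<le> a \<Longrightarrow> a \<le> 1 \<Longrightarrow> \<bar>quantile_subgrad a q y\<bar> \<le> 1"
  by (simp add: quantile_subgrad_def)

lemma rho_subgradient:
  assumes "0 \<le> a" "a \<le> 1"
  shows "rho a q y - rho a u y \<le> quantile_subgrad a q y * (q - u)"
  using rho_ge_linear[OF assms, where q = u and y = y]
  by (cases "y \<le> q") (simp_all add: quantile_subgrad_def rho_above rho_below algebra_simps)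

lemma rho_le_between:
  assumes "0 \<le> a" "a \<le> 1" and "y \<le> q' \<and> q' \<le> q \<or> q \<le> q' \<and> q' \<le> y"
  shows "rho a q' y \<le> rho a q y"
  using assms by (auto simp: rho_above rho_below intro!: mult_left_mono)

lemma abs_clip_le: "0 \<le> R \<Longrightarrow> \<bar>clip R x\<bar> \<le> R"
  by (auto simp: clip_def)

lemma rho_clip_le:
  assumes "0 \<le> a" "a \<le> 1" "\<bar>y - b\<bar> \<le> R"
  shows "rho a (b + clip R x) y \<le> rho a (b + x) y"
  using assms by (intro rho_le_between) (auto simp: clip_def)

lemma sqdist_add_scaled:
  "sqdist m (\<lambda>i. x i + s * d i) v
     = sqdist m x v + 2 * s * (\<Sum>i<m. (x i - v i) * d i) + s\<^sup>2 * (\<Sum>i<m. (d i)\<^sup>2)"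
  unfolding sqdist_def sum_distrib_left sum.distrib[symmetric]
  by (rule sum.cong) (simp_all add: power2_eq_square algebra_simps)

lemma sqdist_le_card_mult:
  assumes "\<And>i. i < m \<Longrightarrow> \<bar>x i - v i\<bar> \<le> R"
  shows "sqdist m x v \<le> real m * R\<^sup>2"
proof -
  have "(x i - v i)\<^sup>2 \<le> R\<^sup>2" if "i < m" for i
    using assms[OF that] by (simp add: abs_le_square_iff[symmetric])
  then show ?thesis
    unfolding sqdist_def using sum_mono[of "{..<m}" "\<lambda>i. (x i - v i)\<^sup>2" "\<lambda>_. R\<^sup>2"] by simp
qed

lemma is_proj_feasible_direction:
  assumes proj: "is_proj m C v x" and "s0 > 0"
    and feasible: "\<And>s. 0 < s \<Longrightarrow> s \<le> s0 \<Longrightarrow> (\<lambda>i. x i + s * d i) \<in> C"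
  shows "0 \<le> (\<Sum>i<m. (x i - v i) * d i)"
proof -
  define X Y where "X = (\<Sum>i<m. (x i - v i) * d i)" and "Y = (\<Sum>i<m. (d i)\<^sup>2)"
  have "0 \<le> 2 * X + s * Y" if "0 < s" "s \<le> s0" for s
  proof -
    have "sqdist m x v \<le> sqdist m (\<lambda>i. x i + s * d i) v"
      using proj feasible[OF that] unfolding is_proj_def by blast
    then have "0 \<le> s * (2 * X + s * Y)"
      unfolding sqdist_add_scaled X_def Y_def by (simp add: power2_eq_square algebra_simps)
    with \<open>0 < s\<close> show ?thesis by (simp add: zero_le_mult_iff)
  qed
  then have "eventually (\<lambda>s. 0 \<le> 2 * X + s * Y) (at_right 0)"
    using \<open>s0 > 0\<close> unfolding eventually_at_right_field by (metis less_le_not_le linorder_linear)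
  moreover have "((\<lambda>s. 2 * X + s * Y) \<longlongrightarrow> 2 * X) (at_right 0)"
    by (auto intro!: tendsto_eq_intros)
  ultimately have "0 \<le> 2 * X"
    using tendsto_lowerbound trivial_limit_at_right_real by blast
  then show ?thesis unfolding X_def by simp
qed

lemma mem_shift_set_iff: "z \<in> shift_set C v \<longleftrightarrow> (\<lambda>i. z i + v i) \<in> C"
  unfolding shift_set_def by force

lemma Kset_subgrad_step:
  fixes q alpha :: "nat \<Rightarrow> real"
  assumes q: "q \<in> Kset m" and alpha_mono: "\<And>i j. i \<le> j \<Longrightarrow> j < m \<Longrightarrow> alpha i \<le> alpha j"
  obtains s0 where "s0 > 0"
    and "\<And>s. 0 < s \<Longrightarrow> s \<le> s0 \<Longrightarrow>
           (\<lambda>i. q i - s * quantile_subgrad (alpha i) (q i) yy) \<in> Kset m"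
proof
  \<comment> \<open>A step no longer than the distance from each uncovered forecast up to \<open>yy\<close> cannot
    push it past a covered one; among equally covered coordinates, monotone levels keep the order.\<close>
  define S where "S = insert 1 {yy - q i | i. i < m \<and> q i < yy}"
  have "finite S" unfolding S_def by auto
  show "Min S > 0"
    using \<open>finite S\<close> by (subst Min_gr_iff) (auto simp: S_def)
  have gap: "Min S \<le> yy - q i" if "i < m" "q i < yy" for i
    using \<open>finite S\<close> that by (intro Min_le) (auto simp: S_def)
  fix s assume s: "0 < s" "s \<le> Min S"
  show "(\<lambda>i. q i - s * quantile_subgrad (alpha i) (q i) yy) \<in> Kset m"
    unfolding Kset_def
  proof (intro CollectI allI impI)
    fix i j assume ij: "i \<le> j" "j < m"
    have "q i \<le> q j" using q ij unfolding Kset_def by blast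
    moreover have "s * alpha i \<le> s * alpha j" using alpha_mono[OF ij] s by simp
    moreover have "s \<le> yy - q i" if "q i < yy" using gap[of i] ij s that by simp
    ultimately show "q i - s * quantile_subgrad (alpha i) (q i) yy
        \<le> q j - s * quantile_subgrad (alpha j) (q j) yy"
      by (auto simp: quantile_subgrad_def algebra_simps)
  qed
qed

lemma is_proj_shift_Kset_subgrad:
  fixes a b p alpha :: "nat \<Rightarrow> real"
  assumes proj: "is_proj m (shift_set (Kset m) b) a p"
    and alpha_mono: "\<And>i j. i \<le> j \<Longrightarrow> j < m \<Longrightarrow> alpha i \<le> alpha j"
  shows "(\<Sum>i<m. quantile_subgrad (alpha i) (b i + p i) yy * (p i - a i)) \<le> 0"
proof -
  define g where "g i = quantile_subgrad (alpha i) (b i + p i) yy" for i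
  have "(\<lambda>i. b i + p i) \<in> Kset m"
    using proj unfolding is_proj_def mem_shift_set_iff by (simp add: add.commute)
  then obtain s0 where "s0 > 0"
    and step: "\<And>s. 0 < s \<Longrightarrow> s \<le> s0 \<Longrightarrow> (\<lambda>i. b i + p i - s * g i) \<in> Kset m"
    using Kset_subgrad_step alpha_mono unfolding g_def by blast
  have "0 \<le> (\<Sum>i<m. (p i - a i) * - g i)"
  proof (rule is_proj_feasible_direction[OF proj \<open>s0 > 0\<close>])
    fix s assume "0 < s" "s \<le> s0"
    then show "(\<lambda>i. p i + s * - g i) \<in> shift_set (Kset m) b"
      using step unfolding mem_shift_set_iff by (simp add: algebra_simps)
  qed
  moreover have "(\<Sum>i<m. g i * (p i - a i)) = - (\<Sum>i<m. (p i - a i) * - g i)"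
    by (simp add: sum_negf mult.commute)
  ultimately show ?thesis unfolding g_def by linarith
qed

lemma rhoA_regret_le_linear:
  fixes a p bt alpha \<theta> :: "nat \<Rightarrow> real"
  assumes proj: "is_proj m (shift_set (Kset m) bt) a p"
    and alpha_mono: "\<And>i j. i \<le> j \<Longrightarrow> j < m \<Longrightarrow> alpha i \<le> alpha j"
    and alpha_unit: "\<And>i. i < m \<Longrightarrow> 0 \<le> alpha i \<and> alpha i \<le> 1"
    and bound: "\<And>i. i < m \<Longrightarrow> \<bar>yy - bt i\<bar> \<le> R"
  shows "rhoA m alpha (\<lambda>i. bt i + p i) yy - rhoA m alpha (\<lambda>i. bt i + \<theta> i) yy
       \<le> (\<Sum>i<m. quantile_subgrad (alpha i) (bt i + p i) yy * (a i - clip R (\<theta> i)))"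
proof -
  define g where "g i = quantile_subgrad (alpha i) (bt i + p i) yy" for i
  define u where "u i = clip R (\<theta> i)" for i
  have "rhoA m alpha (\<lambda>i. bt i + u i) yy \<le> rhoA m alpha (\<lambda>i. bt i + \<theta> i) yy"
    unfolding rhoA_def u_def using alpha_unit bound by (intro sum_mono rho_clip_le) auto
  moreover have "rhoA m alpha (\<lambda>i. bt i + p i) yy - rhoA m alpha (\<lambda>i. bt i + u i) yy
      \<le> (\<Sum>i<m. g i * (p i - u i))"
    unfolding rhoA_def sum_subtractf[symmetric]
  proof (rule sum_mono)
    fix i assume "i \<in> {..<m}"
    then show "rho (alpha i) (bt i + p i) yy - rho (alpha i) (bt i + u i) yy \<le> g i * (p i - u i)"
      using rho_subgradient[of "alpha i" "bt i + p i" yy "bt i + u i"] alpha_unit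
      by (simp add: g_def)
  qed
  moreover have "(\<Sum>i<m. g i * (p i - a i)) \<le> 0"
    unfolding g_def by (rule is_proj_shift_Kset_subgrad[OF proj alpha_mono])
  moreover have "(\<Sum>i<m. g i * (p i - u i)) = (\<Sum>i<m. g i * (a i - u i)) + (\<Sum>i<m. g i * (p i - a i))"
    by (simp add: sum.distrib[symmetric] algebra_simps)
  ultimately show ?thesis unfolding g_def u_def by linarith
qed

lemma gd_telescope:
  fixes a g :: "nat \<Rightarrow> nat \<Rightarrow> real" and u :: "nat \<Rightarrow> real"
  assumes step: "\<And>t i. t \<ge> 1 \<Longrightarrow> i < m \<Longrightarrow> a (t + 1) i = a t i - \<eta> * g t i"
  shows "2 * \<eta> * (\<Sum>t=1..T. \<Sum>i<m. g t i * (a t i - u i))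
         = sqdist m (a 1) u - sqdist m (a (T + 1)) u + \<eta>\<^sup>2 * (\<Sum>t=1..T. \<Sum>i<m. (g t i)\<^sup>2)"
proof (induction T)
  case 0
  show ?case by simp
next
  case (Suc T)
  have "sqdist m (a (Suc T + 1)) u = sqdist m (\<lambda>i. a (Suc T) i + (- \<eta>) * g (Suc T) i) u"
    unfolding sqdist_def using step by (intro sum.cong) auto
  also have "\<dots> = sqdist m (a (Suc T)) u - 2 * \<eta> * (\<Sum>i<m. g (Suc T) i * (a (Suc T) i - u i))
      + \<eta>\<^sup>2 * (\<Sum>i<m. (g (Suc T) i)\<^sup>2)"
    unfolding sqdist_add_scaled by (simp add: mult.commute)
  finally show ?case using Suc by (simp add: algebra_simps)
qed

lemma gd_linear_regret:
  fixes a g :: "nat \<Rightarrow> nat \<Rightarrow> real" and u :: "nat \<Rightarrow> real"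
  assumes step: "\<And>t i. t \<ge> 1 \<Longrightarrow> i < m \<Longrightarrow> a (t + 1) i = a t i - \<eta> * g t i"
    and "\<eta> > 0"
    and g_bound: "\<And>t i. t \<ge> 1 \<Longrightarrow> i < m \<Longrightarrow> \<bar>g t i\<bar> \<le> 1"
  shows "(\<Sum>t=1..T. \<Sum>i<m. g t i * (a t i - u i))
         \<le> sqdist m (a 1) u / (2 * \<eta>) + \<eta> * real T * real m / 2"
proof -
  have "(\<Sum>t=1..T. \<Sum>i<m. (g t i)\<^sup>2) \<le> (\<Sum>t=1..T. \<Sum>i<m. 1)"
    using g_bound by (intro sum_mono) (simp add: abs_square_le_1)
  then have "\<eta>\<^sup>2 * (\<Sum>t=1..T. \<Sum>i<m. (g t i)\<^sup>2) \<le> \<eta>\<^sup>2 * (real T * real m)"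
    by (intro mult_left_mono) auto
  moreover have "0 \<le> sqdist m (a (T + 1)) u"
    unfolding sqdist_def by (simp add: sum_nonneg)
  moreover have "2 * \<eta> * (\<Sum>t=1..T. \<Sum>i<m. g t i * (a t i - u i))
      = sqdist m (a 1) u - sqdist m (a (T + 1)) u + \<eta>\<^sup>2 * (\<Sum>t=1..T. \<Sum>i<m. (g t i)\<^sup>2)"
    by (rule gd_telescope) (rule step)
  ultimately have "2 * \<eta> * (\<Sum>t=1..T. \<Sum>i<m. g t i * (a t i - u i))
      \<le> sqdist m (a 1) u + \<eta>\<^sup>2 * (real T * real m)"
    by linarith
  with \<open>\<eta> > 0\<close> show ?thesis
    by (simp add: field_simps power2_eq_square)
qed

lemma multiqt_regret:
  fixes alpha \<theta> :: "nat \<Rightarrow> real" and b tth th :: "nat \<Rightarrow> nat \<Rightarrow> real" and y :: "nat \<Rightarrow> real"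
  assumes alpha_mono: "\<And>i j. i \<le> j \<Longrightarrow> j < m \<Longrightarrow> alpha i \<le> alpha j"
    and alpha_unit: "\<And>i. i < m \<Longrightarrow> 0 \<le> alpha i \<and> alpha i \<le> 1"
    and bound: "\<And>t i. t \<ge> 1 \<Longrightarrow> i < m \<Longrightarrow> \<bar>y t - b t i\<bar> \<le> R"
    and eta: "\<eta> > 0"
    and alg: "multiqt m alpha \<eta> b y (\<lambda>_. 0) tth th"
  shows "(\<Sum>t=1..T. rhoA m alpha (\<lambda>i. b t i + th t i) (y t))
           - (\<Sum>t=1..T. rhoA m alpha (\<lambda>i. b t i + \<theta> i) (y t))
         \<le> real m * R\<^sup>2 / (2 * \<eta>) + \<eta> * real T * real m / 2"
proof -
  define g where "g t i = quantile_subgrad (alpha i) (b t i + th t i) (y t)" for t i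
  define u where "u i = clip R (\<theta> i)" for i
  have tth1: "\<And>i. i < m \<Longrightarrow> tth 1 i = 0"
    and proj: "\<And>t. t \<ge> 1 \<Longrightarrow> is_proj m (shift_set (Kset m) (b t)) (tth t) (th t)"
    and step: "\<And>t i. t \<ge> 1 \<Longrightarrow> i < m \<Longrightarrow> tth (t + 1) i = tth t i - \<eta> * g t i"
    using alg unfolding multiqt_def g_def quantile_subgrad_def by auto
  have g_bound: "\<And>t i. i < m \<Longrightarrow> \<bar>g t i\<bar> \<le> 1"
    using alpha_unit abs_quantile_subgrad_le unfolding g_def by blast
  have "(\<Sum>t=1..T. rhoA m alpha (\<lambda>i. b t i + th t i) (y t))
      - (\<Sum>t=1..T. rhoA m alpha (\<lambda>i. b t i + \<theta> i) (y t))
      \<le> (\<Sum>t=1..T. \<Sum>i<m. g t i * (tth t i - u i))"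
    unfolding sum_subtractf[symmetric] g_def u_def
    using proj alpha_mono alpha_unit bound by (intro sum_mono rhoA_regret_le_linear) auto
  also have "\<dots> \<le> sqdist m (tth 1) u / (2 * \<eta>) + \<eta> * real T * real m / 2"
    by (rule gd_linear_regret) (rule step eta g_bound | assumption)+
  also have "\<dots> \<le> real m * R\<^sup>2 / (2 * \<eta>) + \<eta> * real T * real m / 2"
  proof -
    have "sqdist m (tth 1) u \<le> real m * R\<^sup>2"
    proof (rule sqdist_le_card_mult)
      fix i assume "i < m"
      then have "0 \<le> R" using bound[of 1 i] by linarith
      then show "\<bar>tth 1 i - u i\<bar> \<le> R" using tth1[OF \<open>i < m\<close>] abs_clip_le by (simp add: u_def)
    qed
    with eta show ?thesis by (simp add: divide_right_mono)
  qed
  finally show ?thesis .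
qed

theorem proposition8:
  fixes m T :: nat and alpha :: "nat \<Rightarrow> real" and \<eta> R :: real
    and b :: "nat \<Rightarrow> nat \<Rightarrow> real" and y :: "nat \<Rightarrow> real"
    and tth th :: "nat \<Rightarrow> nat \<Rightarrow> real" and \<theta> :: "nat \<Rightarrow> real"
  assumes alpha_mono: "\<And>i j. i < j \<Longrightarrow> j < m \<Longrightarrow> alpha i < alpha j"
    and alpha_range: "\<And>i. i < m \<Longrightarrow> 0 < alpha i \<and> alpha i < 1"
    and bK: "\<And>t. t \<ge> 1 \<Longrightarrow> b t \<in> Kset m"
    and bound: "\<And>t i. t \<ge> 1 \<Longrightarrow> i < m \<Longrightarrow> \<bar>y t - b t i\<bar> \<le> R"
    and eta: "\<eta> > 0"
    and T: "T \<ge> 1"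
    and alg: "multiqt m alpha \<eta> b y (\<lambda>_. 0) tth th"
    and theta: "\<theta> \<in> (\<Inter>t\<in>{1..T+1}. shift_set (Kset m) (b t))"
  shows "(1 / real T) * (\<Sum>t=1..T. rhoA m alpha (\<lambda>i. b t i + th t i) (y t))
           - (1 / real T) * (\<Sum>t=1..T. rhoA m alpha (\<lambda>i. b t i + \<theta> i) (y t))
         \<le> R^2 * real m / (2 * \<eta> * real T) + 2 * \<eta> * real m"
proof -
  have alpha_le: "\<And>i j. i \<le> j \<Longrightarrow> j < m \<Longrightarrow> alpha i \<le> alpha j"
    using alpha_mono by (metis le_less order_refl)
  have alpha_unit: "\<And>i. i < m \<Longrightarrow> 0 \<le> alpha i \<and> alpha i \<le> 1"
    using alpha_range by fastforce
  have "(\<Sum>t=1..T. rhoA m alpha (\<lambda>i. b t i + th t i) (y t))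
      - (\<Sum>t=1..T. rhoA m alpha (\<lambda>i. b t i + \<theta> i) (y t))
      \<le> real m * R\<^sup>2 / (2 * \<eta>) + \<eta> * real T * real m / 2" (is "?A - ?B \<le> ?bound")
    using alpha_le alpha_unit bound eta alg by (rule multiqt_regret)
  then have "(?A - ?B) / real T \<le> ?bound / real T"
    by (rule divide_right_mono) simp
  also have "\<dots> = R^2 * real m / (2 * \<eta> * real T) + \<eta> * real m / 2"
    using T by (simp add: field_simps)
  also have "\<dots> \<le> R^2 * real m / (2 * \<eta> * real T) + 2 * \<eta> * real m"
    using eta by simp
  finally show ?thesis
    by (simp add: diff_divide_distrib)
qed

end
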